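(* Let $A\in\mathcal{T}$ and let $\beta^A_{k,n}$ ($k\in\mathbb{Z}$, $n\in\mathbb{Z}_+$) be the coefficients of its series representation, i.e. the $k$-th Fourier coefficient $A_k$ of $\pi^{-1}(A)$ equals $T_{-k,0}\sum_n\beta^A_{k,n}T_{n,n}$ if $k\le0$ and $\big(\sum_n\beta^A_{k,n}T_{n,n}\big)T_{0,k}$ if $k>0$. Then $A$ is compact if and only if $\sum_{n=0}^\infty\beta^A_{k,n}=0$ for every $k\in\mathbb{Z}$.
   Context: Let $\ell^2(\mathbb{Z}_+)$ have orthonormal basis $(e_n)_{n\ge0}$, let $T$ be the unilateral shift $Te_n=e_{n+1}$, and let $\mathcal{T}$ be the norm-closed subalgebra of $B(\ell^2(\mathbb{Z}_+))$ generated by $T$ and $T^*$. For $n,m\in\mathbb{Z}_+$ put $T_{n,m}=T^n(T^* )^m$. $\widetilde{T}_{n,m}\in C(S^1,\mathcal{T})$ is $\widetilde{T}_{n,m}(e^{i\theta})=e^{i(m-n)\theta}T_{n,m}$, $\widetilde{\mathcal{T}}$ is the closed subalgebra of $C(S^1,\mathcal{T})$ (sup norm) generated by them, and $\pi:\widetilde{\mathcal{T}}\to\mathcal{T}$, $\pi(F)=F(1)$, is a *-isomorphism. The $k$-th Fourier coefficient of $F$ is $\frac{1}{2\pi}\int_0^{2\pi}F(e^{i\theta})e^{-ik\theta}d\theta$. Each such coefficient $A_k$ of $\pi^{-1}(A)$ has the displayed form with strongly convergent inner series and $\sum_n\beta^A_{k,n}$ convergent. *)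

theory Defs
  imports "HOL-Analysis.Analysis"
begin

text \<open>Concrete model of l^2(Z_+): vectors are complex sequences indexed by nat;
  operators are maps on such sequences, only their behaviour on l2 matters.\<close>

type_synonym vec = "nat \<Rightarrow> complex"
type_synonym oper = "vec \<Rightarrow> vec"

definition l2 :: "vec set" where
  "l2 = {x. summable (\<lambda>n. (cmod (x n))\<^sup>2)}"

definition l2norm :: "vec \<Rightarrow> real" where
  "l2norm x = sqrt (\<Sum>n. (cmod (x n))\<^sup>2)"

definition vdiff :: "vec \<Rightarrow> vec \<Rightarrow> vec" where
  "vdiff x y = (\<lambda>i. x i - y i)"

definition l2_tendsto :: "(nat \<Rightarrow> vec) \<Rightarrow> vec \<Rightarrow> bool" where
  "l2_tendsto s y \<longleftrightarrow> y \<in> l2 \<and> (\<forall>N. s N \<in> l2) \<and>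
     (\<lambda>N. l2norm (vdiff (s N) y)) \<longlonglongrightarrow> 0"

definition op_add :: "oper \<Rightarrow> oper \<Rightarrow> oper" where
  "op_add A B = (\<lambda>x i. A x i + B x i)"

definition op_diff :: "oper \<Rightarrow> oper \<Rightarrow> oper" where
  "op_diff A B = (\<lambda>x i. A x i - B x i)"

definition op_scale :: "complex \<Rightarrow> oper \<Rightarrow> oper" where
  "op_scale c A = (\<lambda>x i. c * A x i)"

definition bounded_op :: "oper \<Rightarrow> bool" where
  "bounded_op A \<longleftrightarrow>
     (\<forall>x\<in>l2. A x \<in> l2) \<and>
     (\<forall>x\<in>l2. \<forall>y\<in>l2. \<forall>a b. A (\<lambda>i. a * x i + b * y i) = (\<lambda>i. a * A x i + b * A y i)) \<and>
     (\<exists>C. \<forall>x\<in>l2. l2norm (A x) \<le> C * l2norm x)"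

definition opnorm :: "oper \<Rightarrow> real" where
  "opnorm A = Sup {l2norm (A x) | x. x \<in> l2 \<and> l2norm x \<le> 1}"

definition compact_op :: "oper \<Rightarrow> bool" where
  "compact_op A \<longleftrightarrow> bounded_op A \<and>
     (\<forall>xs. (\<forall>j. xs j \<in> l2) \<and> (\<exists>M. \<forall>j. l2norm (xs j) \<le> M) \<longrightarrow>
        (\<exists>(r::nat \<Rightarrow> nat) y. strict_mono r \<and> l2_tendsto (\<lambda>j. A (xs (r j))) y))"

definition shift :: oper where
  "shift x = (\<lambda>n. if n = 0 then 0 else x (n - 1))"

definition shift_adj :: oper where
  "shift_adj x = (\<lambda>n. x (Suc n))"

definition Tnm :: "nat \<Rightarrow> nat \<Rightarrow> oper" where
  "Tnm n m = (shift ^^ n) \<circ> (shift_adj ^^ m)"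

inductive_set toep_gen :: "oper set" where
  gen_T: "shift \<in> toep_gen"
| gen_Tadj: "shift_adj \<in> toep_gen"
| gen_add: "A \<in> toep_gen \<Longrightarrow> B \<in> toep_gen \<Longrightarrow> op_add A B \<in> toep_gen"
| gen_scale: "A \<in> toep_gen \<Longrightarrow> op_scale c A \<in> toep_gen"
| gen_mult: "A \<in> toep_gen \<Longrightarrow> B \<in> toep_gen \<Longrightarrow> A \<circ> B \<in> toep_gen"

definition toeplitz :: "oper set" where
  "toeplitz = {A. bounded_op A \<and> (\<forall>e>0. \<exists>B\<in>toep_gen. opnorm (op_diff A B) < e)}"

text \<open>Functions on S^1 are parametrised by theta (value at e^(i theta)).
  T~_(n,m)(e^(i theta)) = e^(i(m-n)theta) T_(n,m).\<close>
definition Ttil :: "nat \<Rightarrow> nat \<Rightarrow> real \<Rightarrow> oper" where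
  "Ttil n m \<theta> = op_scale (exp (\<i> * of_real ((real m - real n) * \<theta>))) (Tnm n m)"

inductive_set toep_til_gen :: "(real \<Rightarrow> oper) set" where
  tgen_basic: "Ttil n m \<in> toep_til_gen"
| tgen_add: "F \<in> toep_til_gen \<Longrightarrow> G \<in> toep_til_gen \<Longrightarrow> (\<lambda>\<theta>. op_add (F \<theta>) (G \<theta>)) \<in> toep_til_gen"
| tgen_scale: "F \<in> toep_til_gen \<Longrightarrow> (\<lambda>\<theta>. op_scale c (F \<theta>)) \<in> toep_til_gen"
| tgen_mult: "F \<in> toep_til_gen \<Longrightarrow> G \<in> toep_til_gen \<Longrightarrow> (\<lambda>\<theta>. F \<theta> \<circ> G \<theta>) \<in> toep_til_gen"

definition C_circle_toep :: "(real \<Rightarrow> oper) set" where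
  "C_circle_toep = {F. (\<forall>\<theta>. F \<theta> \<in> toeplitz) \<and>
     (\<forall>\<theta> x. x \<in> l2 \<longrightarrow> F (\<theta> + 2 * pi) x = F \<theta> x) \<and>
     (\<forall>\<theta>. \<forall>e>0. \<exists>d>0. \<forall>\<theta>'. \<bar>\<theta>' - \<theta>\<bar> < d \<longrightarrow> opnorm (op_diff (F \<theta>') (F \<theta>)) < e)}"

definition toep_til :: "(real \<Rightarrow> oper) set" where
  "toep_til = {F. F \<in> C_circle_toep \<and>
     (\<forall>e>0. \<exists>G\<in>toep_til_gen. \<forall>\<theta>. opnorm (op_diff (F \<theta>) (G \<theta>)) < e)}"

definition fourier_coeff :: "(real \<Rightarrow> oper) \<Rightarrow> int \<Rightarrow> oper" where
  "fourier_coeff F k x = (\<lambda>i. complex_of_real (1 / (2 * pi)) *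
     integral {0..2 * pi} (\<lambda>\<theta>. F \<theta> x i * exp (- \<i> * of_real (real_of_int k * \<theta>))))"

definition series_form :: "(nat \<Rightarrow> complex) \<Rightarrow> int \<Rightarrow> oper \<Rightarrow> bool" where
  "series_form b k Ak \<longleftrightarrow> (\<forall>x\<in>l2.
     (if k \<le> 0 then
        (\<exists>y. l2_tendsto (\<lambda>N i. \<Sum>n<N. b n * Tnm n n x i) y \<and> Ak x = Tnm (nat (- k)) 0 y)
      else
        l2_tendsto (\<lambda>N i. \<Sum>n<N. b n * Tnm n n (Tnm 0 (nat k) x) i) (Ak x)))"

text \<open>beta are the coefficients of the series representation of A: the Fourier
  coefficients of pi^(-1)(A) (the element F of T~ with F(1) = A) have the series form.\<close>
definition series_coeffs :: "oper \<Rightarrow> (int \<Rightarrow> nat \<Rightarrow> complex) \<Rightarrow> bool" where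
  "series_coeffs A \<beta> \<longleftrightarrow> (\<exists>F. F \<in> toep_til \<and> (\<forall>x\<in>l2. F 0 x = A x) \<and>
     (\<forall>k. series_form (\<beta> k) k (fourier_coeff F k)))"

end

theory Submission
  imports Defs "HOL-Library.Diagonal_Subsequence"
begin

text \<open>Both sides are statements about the matrix of \<open>A\<close> in the basis \<open>(e_n)\<close>.
  Rotating the basis, \<open>U_\<theta> e_n = exp(i n \<theta>) e_n\<close>, multiplies the \<open>(i, j)\<close> entry of an
  element of the algebra by \<open>exp(i (j - i) \<theta>)\<close>, so the Fourier coefficient \<open>A_k\<close> keeps
  exactly the \<open>k\<close>-th diagonal of \<open>A\<close>; testing its series form on \<open>e_j\<close> shows that the
  \<open>j\<close>-th partial sum of \<open>\<beta>_k\<close> is the \<open>j\<close>-th entry of that diagonal. So the series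
  condition says that every diagonal of \<open>A\<close> tends to zero.

  A compact \<open>A\<close> has this property, since \<open>e_j \<rightarrow> 0\<close> weakly forces \<open>\<parallel>A e_j\<parallel> \<rightarrow> 0\<close>.
  Conversely, approximate \<open>A\<close> within \<open>\<epsilon>\<close> by a band operator \<open>B\<close>, a finite combination of
  the \<open>T(a, b)\<close>. Below its first \<open>M\<close> rows \<open>B\<close> commutes with the shift, so the rows of
  \<open>B y\<close> beyond \<open>M\<close> reappear in \<open>B (T^n y)\<close>, which is within \<open>\<epsilon> \<parallel>y\<parallel>\<close> of \<open>A (T^n y)\<close>; for
  finitely supported \<open>y\<close> the rows of the latter tend to zero as \<open>n \<rightarrow> \<infinity>\<close> by the diagonal
  condition. Hence \<open>A\<close> maps bounded coordinatewise null sequences to norm null sequences,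
  and a diagonal subsequence argument gives compactness.\<close>

section \<open>Square summable sequences\<close>

definition basis_vec :: "nat \<Rightarrow> vec" where
  "basis_vec j = (\<lambda>i. if i = j then 1 else 0)"

lemma L2_set_cmod_eq: "L2_set (\<lambda>i. cmod (x i)) S = sqrt (\<Sum>i\<in>S. (cmod (x i))\<^sup>2)"
  by (simp add: L2_set_def)

lemma l2_if_L2_set_bounded:
  assumes "\<And>N. L2_set (\<lambda>i. cmod (x i)) {..<N} \<le> C"
  shows "x \<in> l2" "l2norm x \<le> C"
proof -
  have C0: "0 \<le> C" using assms[of 0] by simp
  have partial: "(\<Sum>i<N. (cmod (x i))\<^sup>2) \<le> C\<^sup>2" for N
    using assms[of N] by (simp add: L2_set_cmod_eq sqrt_le_D)
  have summ: "summable (\<lambda>n. (cmod (x n))\<^sup>2)"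
    by (rule summableI_nonneg_bounded[where x="C\<^sup>2"]) (use partial in auto)
  then show "x \<in> l2" by (simp add: l2_def)
  have "(\<Sum>n. (cmod (x n))\<^sup>2) \<le> C\<^sup>2" using suminf_le_const[OF summ partial] .
  then show "l2norm x \<le> C" unfolding l2norm_def using C0 real_sqrt_le_mono by fastforce
qed

lemma l2norm_nonneg: "x \<in> l2 \<Longrightarrow> 0 \<le> l2norm x"
  unfolding l2norm_def l2_def by (auto intro: suminf_nonneg)

lemma sum_cmod_sq_le_l2norm_sq:
  assumes "x \<in> l2" "finite S"
  shows "(\<Sum>i\<in>S. (cmod (x i))\<^sup>2) \<le> (l2norm x)\<^sup>2"
proof -
  have summ: "summable (\<lambda>n. (cmod (x n))\<^sup>2)" using assms by (simp add: l2_def)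
  have "(\<Sum>i\<in>S. (cmod (x i))\<^sup>2) \<le> (\<Sum>n. (cmod (x n))\<^sup>2)"
    by (rule sum_le_suminf[OF summ assms(2)]) auto
  moreover have "0 \<le> (\<Sum>n. (cmod (x n))\<^sup>2)" by (rule suminf_nonneg[OF summ]) auto
  ultimately show ?thesis by (simp add: l2norm_def)
qed

lemma L2_set_le_l2norm:
  assumes "x \<in> l2" "finite S"
  shows "L2_set (\<lambda>i. cmod (x i)) S \<le> l2norm x"
proof -
  have "sqrt (\<Sum>i\<in>S. (cmod (x i))\<^sup>2) \<le> sqrt ((l2norm x)\<^sup>2)"
    by (rule real_sqrt_le_mono[OF sum_cmod_sq_le_l2norm_sq[OF assms]])
  then show ?thesis by (simp add: L2_set_cmod_eq l2norm_nonneg[OF assms(1)])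
qed

lemma cmod_coord_le_l2norm: "x \<in> l2 \<Longrightarrow> cmod (x i) \<le> l2norm x"
  using L2_set_le_l2norm[of x "{i}"] by (simp add: L2_set_cmod_eq)

lemma L2_set_shift_le_l2norm:
  assumes "x \<in> l2"
  shows "L2_set (\<lambda>i. cmod (x (i + n))) {M..<R} \<le> l2norm x"
proof -
  have "L2_set (\<lambda>i. cmod (x (i + n))) {M..<R} = L2_set (\<lambda>k. cmod (x k)) ((\<lambda>i. i + n) ` {M..<R})"
    unfolding L2_set_def by (subst sum.reindex) (auto simp: inj_on_def)
  also have "\<dots> \<le> l2norm x" by (rule L2_set_le_l2norm[OF assms]) auto
  finally show ?thesis .
qed

lemma l2_add:
  assumes "x \<in> l2" "y \<in> l2"
  shows "(\<lambda>i. x i + y i) \<in> l2" "l2norm (\<lambda>i. x i + y i) \<le> l2norm x + l2norm y"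
proof -
  have "L2_set (\<lambda>i. cmod (x i + y i)) {..<N} \<le> l2norm x + l2norm y" for N
  proof -
    have "L2_set (\<lambda>i. cmod (x i + y i)) {..<N} \<le> L2_set (\<lambda>i. cmod (x i) + cmod (y i)) {..<N}"
      by (rule L2_set_mono) (auto intro: norm_triangle_ineq)
    also have "\<dots> \<le> L2_set (\<lambda>i. cmod (x i)) {..<N} + L2_set (\<lambda>i. cmod (y i)) {..<N}"
      by (rule L2_set_triangle_ineq)
    also have "\<dots> \<le> l2norm x + l2norm y"
      using assms by (intro add_mono L2_set_le_l2norm) auto
    finally show ?thesis .
  qed
  then show "(\<lambda>i. x i + y i) \<in> l2" "l2norm (\<lambda>i. x i + y i) \<le> l2norm x + l2norm y"
    by (rule l2_if_L2_set_bounded)+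
qed

lemma l2_scale:
  assumes "x \<in> l2"
  shows "(\<lambda>i. c * x i) \<in> l2" "l2norm (\<lambda>i. c * x i) = cmod c * l2norm x"
proof -
  have summ: "summable (\<lambda>n. (cmod (x n))\<^sup>2)" using assms by (simp add: l2_def)
  have sq: "(\<lambda>n. (cmod (c * x n))\<^sup>2) = (\<lambda>n. (cmod c)\<^sup>2 * (cmod (x n))\<^sup>2)"
    by (simp add: norm_mult power_mult_distrib)
  show "(\<lambda>i. c * x i) \<in> l2" unfolding l2_def mem_Collect_eq sq by (rule summable_mult[OF summ])
  have "(\<Sum>n. (cmod c)\<^sup>2 * (cmod (x n))\<^sup>2) = (cmod c)\<^sup>2 * (\<Sum>n. (cmod (x n))\<^sup>2)"
    using suminf_mult[OF summ] by simp
  then show "l2norm (\<lambda>i. c * x i) = cmod c * l2norm x"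
    unfolding l2norm_def sq by (simp add: real_sqrt_mult)
qed

lemma l2_diff:
  assumes "x \<in> l2" "y \<in> l2"
  shows "(\<lambda>i. x i - y i) \<in> l2" "l2norm (\<lambda>i. x i - y i) \<le> l2norm x + l2norm y"
  using l2_add[OF assms(1) l2_scale(1)[OF assms(2), of "-1"]] l2_scale(2)[OF assms(2), of "-1"]
  by simp_all

lemma l2_zero: "(\<lambda>i. 0) \<in> l2" "l2norm (\<lambda>i. 0) = 0"
  by (simp_all add: l2_def l2norm_def)

lemma basis_vec_l2: "basis_vec j \<in> l2" "l2norm (basis_vec j) = 1"
proof -
  have sq: "(\<lambda>i. (cmod (basis_vec j i))\<^sup>2) = (\<lambda>i. if i = j then 1 else 0)"
    by (auto simp: basis_vec_def)
  have "L2_set (\<lambda>i. cmod (basis_vec j i)) {..<N} \<le> 1" for N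
    unfolding L2_set_cmod_eq sq by (simp add: sum.delta')
  then have l2: "basis_vec j \<in> l2" and le: "l2norm (basis_vec j) \<le> 1"
    by (rule l2_if_L2_set_bounded)+
  then show "basis_vec j \<in> l2" by simp
  have "1 \<le> l2norm (basis_vec j)"
    using cmod_coord_le_l2norm[OF l2, of j] by (simp add: basis_vec_def)
  then show "l2norm (basis_vec j) = 1" using le by simp
qed

lemma l2_tendsto_coord:
  assumes "l2_tendsto s y"
  shows "(\<lambda>N. s N i) \<longlonglongrightarrow> y i"
proof -
  have y: "y \<in> l2" and s: "\<And>N. s N \<in> l2" and lim: "(\<lambda>N. l2norm (vdiff (s N) y)) \<longlonglongrightarrow> 0"
    using assms unfolding l2_tendsto_def by auto
  have "cmod (s N i - y i) \<le> l2norm (vdiff (s N) y)" for N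
    unfolding vdiff_def using cmod_coord_le_l2norm[OF l2_diff(1)[OF s[of N] y], of i] by simp
  then have "(\<lambda>N. s N i - y i) \<longlonglongrightarrow> 0"
    by (intro Lim_null_comparison[OF _ lim]) auto
  then show ?thesis by (rule LIM_zero_cancel)
qed

lemma l2_coordwise_limit:
  assumes l2: "\<And>j. xs j \<in> l2" and bound: "\<And>j. l2norm (xs j) \<le> K"
    and lim: "\<And>i. (\<lambda>j. xs j i) \<longlonglongrightarrow> z i"
  shows "z \<in> l2" "l2norm z \<le> K"
proof -
  have "L2_set (\<lambda>i. cmod (z i)) {..<N} \<le> K" for N
  proof -
    have "(\<lambda>j. L2_set (\<lambda>i. cmod (xs j i)) {..<N}) \<longlonglongrightarrow> L2_set (\<lambda>i. cmod (z i)) {..<N}"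
      unfolding L2_set_cmod_eq by (intro tendsto_intros lim)
    moreover have "L2_set (\<lambda>i. cmod (xs j i)) {..<N} \<le> K" for j
      using L2_set_le_l2norm[OF l2[of j], of "{..<N}"] bound[of j] by simp
    ultimately show ?thesis by (intro LIMSEQ_le_const2) auto
  qed
  then show "z \<in> l2" "l2norm z \<le> K" by (rule l2_if_L2_set_bounded)+
qed

lemma l2_bounded_coordwise_convergent_subseq:
  fixes xs :: "nat \<Rightarrow> vec"
  assumes l2: "\<And>j. xs j \<in> l2" and bound: "\<And>j. l2norm (xs j) \<le> K"
  obtains r z where "strict_mono r" "z \<in> l2" "l2norm z \<le> K" "\<And>i. (\<lambda>j. xs (r j) i) \<longlonglongrightarrow> z i"
proof -
  have coord_bound: "cmod (xs j i) \<le> K" for j i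
    using cmod_coord_le_l2norm[OF l2, of j i] bound[of j] by simp
  let ?P = "\<lambda>i s. convergent (\<lambda>j. xs (s j) i)"
  interpret coords: subseqs ?P
  proof (unfold subseqs_def, intro allI impI)
    fix i :: nat and s :: "nat \<Rightarrow> nat"
    have "bounded (range (\<lambda>j. xs (s j) i))"
      unfolding bounded_iff using coord_bound by blast
    then obtain l r where "strict_mono r" "((\<lambda>j. xs (s j) i) \<circ> r) \<longlonglongrightarrow> l"
      using bounded_imp_convergent_subsequence by blast
    then show "\<exists>r. strict_mono r \<and> convergent (\<lambda>j. xs ((s \<circ> r) j) i)"
      by (auto simp: convergent_def o_def)
  qed
  define r where "r = coords.diagseq"
  have conv: "convergent (\<lambda>j. xs (r j) i)" for i
  proof -
    have "?P i (coords.diagseq \<circ> ((+) (Suc i)))"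
    proof (rule coords.diagseq_holds)
      fix q s :: "nat \<Rightarrow> nat" and i :: nat
      assume "strict_mono q" "convergent (\<lambda>j. xs (s j) i)"
      then show "convergent (\<lambda>j. xs ((s \<circ> q) j) i)"
        using convergent_subseq_convergent by (fastforce simp: o_def)
    qed
    then obtain l where "(\<lambda>j. xs (r (j + Suc i)) i) \<longlonglongrightarrow> l"
      by (auto simp: convergent_def r_def add.commute)
    then have "(\<lambda>j. xs (r j) i) \<longlonglongrightarrow> l" by (rule LIMSEQ_offset)
    then show ?thesis by (auto simp: convergent_def)
  qed
  define z where "z i = lim (\<lambda>j. xs (r j) i)" for i
  have lim: "(\<lambda>j. xs (r j) i) \<longlonglongrightarrow> z i" for i
    unfolding z_def using conv convergent_LIMSEQ_iff by blast
  have "z \<in> l2" "l2norm z \<le> K"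
    using l2_coordwise_limit[OF l2 bound lim] .
  moreover have "strict_mono r" unfolding r_def by (rule coords.subseq_diagseq)
  ultimately show ?thesis using that lim by blast
qed

section \<open>Bounded operators\<close>

lemma bounded_op_l2: "bounded_op A \<Longrightarrow> x \<in> l2 \<Longrightarrow> A x \<in> l2"
  by (simp add: bounded_op_def)

lemma bounded_op_linear: "bounded_op A \<Longrightarrow> x \<in> l2 \<Longrightarrow> y \<in> l2 \<Longrightarrow>
   A (\<lambda>i. a * x i + b * y i) = (\<lambda>i. a * A x i + b * A y i)"
  by (simp add: bounded_op_def)

lemma bounded_op_zero: "bounded_op A \<Longrightarrow> A (\<lambda>i. 0) = (\<lambda>i. 0)"
  using bounded_op_linear[OF _ l2_zero(1) l2_zero(1), of A 0 0] by simp

lemma bounded_op_scale: "bounded_op A \<Longrightarrow> x \<in> l2 \<Longrightarrow> A (\<lambda>i. c * x i) = (\<lambda>i. c * A x i)"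
  using bounded_op_linear[of A x x c 0] by simp

lemma bounded_op_diff: "bounded_op A \<Longrightarrow> x \<in> l2 \<Longrightarrow> y \<in> l2 \<Longrightarrow>
   A (\<lambda>i. x i - y i) = (\<lambda>i. A x i - A y i)"
  using bounded_op_linear[of A x y 1 "-1"] by simp

lemma bounded_op_sum:
  fixes N :: nat
  assumes "bounded_op A" "\<And>j. j < N \<Longrightarrow> v j \<in> l2"
  shows "(\<lambda>k. \<Sum>j<N. c j * v j k) \<in> l2" "A (\<lambda>k. \<Sum>j<N. c j * v j k) = (\<lambda>k. \<Sum>j<N. c j * A (v j) k)"
proof -
  have "(\<lambda>k. \<Sum>j<N. c j * v j k) \<in> l2 \<and> A (\<lambda>k. \<Sum>j<N. c j * v j k) = (\<lambda>k. \<Sum>j<N. c j * A (v j) k)"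
    using assms(2)
  proof (induction N)
    case 0
    then show ?case using l2_zero bounded_op_zero[OF assms(1)] by simp
  next
    case (Suc N)
    then have IH: "(\<lambda>k. \<Sum>j<N. c j * v j k) \<in> l2" "A (\<lambda>k. \<Sum>j<N. c j * v j k) = (\<lambda>k. \<Sum>j<N. c j * A (v j) k)"
      and vN: "v N \<in> l2" by auto
    have "(\<lambda>k. 1 * (\<Sum>j<N. c j * v j k) + c N * v N k) \<in> l2"
      using l2_add(1)[OF l2_scale(1)[OF IH(1), of 1] l2_scale(1)[OF vN, of "c N"]] .
    moreover have "A (\<lambda>k. 1 * (\<Sum>j<N. c j * v j k) + c N * v N k) = (\<lambda>k. \<Sum>j<Suc N. c j * A (v j) k)"
      unfolding bounded_op_linear[OF assms(1) IH(1) vN] IH(2) by simp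
    ultimately show ?case by simp
  qed
  then show "(\<lambda>k. \<Sum>j<N. c j * v j k) \<in> l2" "A (\<lambda>k. \<Sum>j<N. c j * v j k) = (\<lambda>k. \<Sum>j<N. c j * A (v j) k)"
    by auto
qed

lemma l2norm_le_opnorm:
  assumes "bounded_op A" "x \<in> l2"
  shows "l2norm (A x) \<le> opnorm A * l2norm x"
proof -
  let ?S = "{l2norm (A x) | x. x \<in> l2 \<and> l2norm x \<le> 1}"
  obtain C where C: "\<And>x. x \<in> l2 \<Longrightarrow> l2norm (A x) \<le> C * l2norm x"
    using assms(1) unfolding bounded_op_def by blast
  have bdd: "bdd_above ?S"
  proof (rule bdd_aboveI[where M="max C 0"])
    fix t assume "t \<in> ?S"
    then obtain z where z: "z \<in> l2" "l2norm z \<le> 1" "t = l2norm (A z)" by blast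
    have "C * l2norm z \<le> max C 0"
      using z(2) l2norm_nonneg[OF z(1)]
      by (cases "C \<ge> 0") (auto simp: mult_le_one mult_left_le mult_nonpos_nonneg)
    then show "t \<le> max C 0" using C[OF z(1)] z(3) by simp
  qed
  show ?thesis
  proof (cases "l2norm x = 0")
    case True
    then have "x = (\<lambda>i. 0)" using cmod_coord_le_l2norm[OF assms(2)] by fastforce
    then show ?thesis using True l2_zero bounded_op_zero[OF assms(1)] by simp
  next
    case False
    define n where "n = l2norm x"
    have n0: "n > 0" using False l2norm_nonneg[OF assms(2)] unfolding n_def by simp
    define x' where "x' = (\<lambda>i. complex_of_real (1/n) * x i)"
    have x': "x' \<in> l2" "l2norm x' = 1"
      unfolding x'_def using l2_scale[OF assms(2), of "complex_of_real (1/n)"] n0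
      by (simp_all only: n_def norm_of_real) simp
    have "l2norm (A x') \<le> opnorm A" unfolding opnorm_def
      by (rule cSup_upper[OF _ bdd]) (use x' in auto)
    moreover have "l2norm (A x') = (1/n) * l2norm (A x)"
      unfolding x'_def bounded_op_scale[OF assms] l2_scale(2)[OF bounded_op_l2[OF assms]]
      using n0 by (simp add: norm_divide)
    ultimately have "l2norm (A x) \<le> n * opnorm A" using n0 by (simp add: field_simps)
    then show ?thesis unfolding n_def by (simp add: mult.commute)
  qed
qed

lemma bounded_op_op_add:
  assumes "bounded_op A" "bounded_op B"
  shows "bounded_op (op_add A B)"
proof -
  obtain CA where CA: "\<And>x. x \<in> l2 \<Longrightarrow> l2norm (A x) \<le> CA * l2norm x"
    using assms(1) unfolding bounded_op_def by blast
  obtain CB where CB: "\<And>x. x \<in> l2 \<Longrightarrow> l2norm (B x) \<le> CB * l2norm x"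
    using assms(2) unfolding bounded_op_def by blast
  have "l2norm (op_add A B x) \<le> (CA + CB) * l2norm x" if x: "x \<in> l2" for x
  proof -
    have "l2norm (op_add A B x) \<le> l2norm (A x) + l2norm (B x)"
      unfolding op_add_def by (rule l2_add(2)[OF bounded_op_l2[OF assms(1) x] bounded_op_l2[OF assms(2) x]])
    also have "\<dots> \<le> (CA + CB) * l2norm x" using CA[OF x] CB[OF x] by (simp add: algebra_simps)
    finally show ?thesis .
  qed
  moreover have "op_add A B (\<lambda>i. a * x i + b * y i) = (\<lambda>i. a * op_add A B x i + b * op_add A B y i)"
    if "x \<in> l2" "y \<in> l2" for x y a b
    unfolding op_add_def bounded_op_linear[OF assms(1) that] bounded_op_linear[OF assms(2) that]
    by (simp add: algebra_simps)
  ultimately show ?thesis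
    unfolding bounded_op_def using l2_add(1)[OF bounded_op_l2[OF assms(1)] bounded_op_l2[OF assms(2)]]
    by (auto simp: op_add_def)
qed

lemma bounded_op_op_scale:
  assumes "bounded_op A"
  shows "bounded_op (op_scale c A)"
proof -
  obtain C where C: "\<And>x. x \<in> l2 \<Longrightarrow> l2norm (A x) \<le> C * l2norm x"
    using assms unfolding bounded_op_def by blast
  have "l2norm (op_scale c A x) \<le> (cmod c * C) * l2norm x" if x: "x \<in> l2" for x
    unfolding op_scale_def l2_scale(2)[OF bounded_op_l2[OF assms x]]
    using mult_left_mono[OF C[OF x] norm_ge_zero[of c]] by (simp add: mult.assoc)
  moreover have "op_scale c A (\<lambda>i. a * x i + b * y i) = (\<lambda>i. a * op_scale c A x i + b * op_scale c A y i)"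
    if "x \<in> l2" "y \<in> l2" for x y a b
    unfolding op_scale_def bounded_op_linear[OF assms that] by (simp add: algebra_simps)
  ultimately show ?thesis
    unfolding bounded_op_def using l2_scale(1)[OF bounded_op_l2[OF assms]]
    by (auto simp: op_scale_def)
qed

lemma bounded_op_op_diff: "bounded_op A \<Longrightarrow> bounded_op B \<Longrightarrow> bounded_op (op_diff A B)"
proof -
  have "op_diff A B = op_add A (op_scale (-1) B)"
    by (simp add: op_diff_def op_add_def op_scale_def fun_eq_iff)
  then show "bounded_op A \<Longrightarrow> bounded_op B \<Longrightarrow> bounded_op (op_diff A B)"
    by (simp add: bounded_op_op_add bounded_op_op_scale)
qed

lemma l2norm_diff_le_opnorm_bound:
  assumes "bounded_op A" "bounded_op B" "opnorm (op_diff A B) < e" "x \<in> l2"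
  shows "l2norm (\<lambda>i. A x i - B x i) \<le> e * l2norm x"
  using l2norm_le_opnorm[OF bounded_op_op_diff[OF assms(1,2)] assms(4)] assms(3) l2norm_nonneg[OF assms(4)]
  by (simp add: op_diff_def) (meson less_eq_real_def mult_right_mono order_trans)

lemma cmod_diff_le_opnorm_bound:
  assumes "bounded_op A" "bounded_op B" "opnorm (op_diff A B) < e" "x \<in> l2"
  shows "cmod (A x i - B x i) \<le> e * l2norm x"
  using cmod_coord_le_l2norm[OF l2_diff(1)[OF bounded_op_l2[OF assms(1,4)] bounded_op_l2[OF assms(2,4)]]]
    l2norm_diff_le_opnorm_bound[OF assms] order_trans by blast

section \<open>Band operators\<close>

text \<open>A triple \<open>(c, a, b)\<close> encodes the operator \<open>c T(a, b)\<close>, a list of triples the sum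
  of its entries.\<close>

definition mono_op :: "complex \<times> nat \<times> nat \<Rightarrow> oper" where
  "mono_op t x i = (case t of (c, a, b) \<Rightarrow> c * (if a \<le> i then x (i + b - a) else 0))"

definition band_op :: "(complex \<times> nat \<times> nat) list \<Rightarrow> oper" where
  "band_op L x i = (\<Sum>t\<leftarrow>L. mono_op t x i)"

text \<open>\<open>T(a1, b1) T(a2, b2) = T(a1 + (a2 - b1), b2 + (b1 - a2))\<close> with truncated
  subtraction, because \<open>T^* T = 1\<close>.\<close>
definition mono_comp :: "complex \<times> nat \<times> nat \<Rightarrow> complex \<times> nat \<times> nat \<Rightarrow> complex \<times> nat \<times> nat" where
  "mono_comp t1 t2 = (case t1 of (c1, a1, b1) \<Rightarrow> case t2 of (c2, a2, b2) \<Rightarrow>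
     (c1 * c2, a1 + (a2 - b1), b2 + (b1 - a2)))"

definition band_comp :: "(complex \<times> nat \<times> nat) list \<Rightarrow> (complex \<times> nat \<times> nat) list \<Rightarrow>
    (complex \<times> nat \<times> nat) list" where
  "band_comp L1 L2 = concat (map (\<lambda>t1. map (mono_comp t1) L2) L1)"

lemma band_op_Nil [simp]: "band_op [] x i = 0"
  by (simp add: band_op_def)

lemma band_op_Cons [simp]: "band_op (t # L) x i = mono_op t x i + band_op L x i"
  by (simp add: band_op_def)

lemma band_op_append: "band_op (L1 @ L2) = op_add (band_op L1) (band_op L2)"
  by (simp add: band_op_def op_add_def fun_eq_iff)

lemma op_scale_band_op: "op_scale c (band_op L) = band_op (map (\<lambda>(c', a, b). (c * c', a, b)) L)"
proof -
  have "c * band_op L x i = band_op (map (\<lambda>(c', a, b). (c * c', a, b)) L) x i" for x i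
    by (induction L) (auto simp: mono_op_def algebra_simps)
  then show ?thesis by (simp add: op_scale_def fun_eq_iff)
qed

lemma band_op_scale_vec: "band_op L (\<lambda>k. c * x k) i = c * band_op L x i"
  by (induction L) (auto simp: mono_op_def algebra_simps)

lemma mono_op_comp: "mono_op t1 (mono_op t2 x) i = mono_op (mono_comp t1 t2) x i"
proof -
  obtain c1 a1 b1 c2 a2 b2 where "t1 = (c1, a1, b1)" "t2 = (c2, a2, b2)"
    by (cases t1, cases t2) auto
  then show ?thesis unfolding mono_op_def mono_comp_def
    by (cases "a1 \<le> i"; cases "a2 \<le> b1"; cases "a2 \<le> i + b1 - a1") (auto simp: algebra_simps)
qed

lemma mono_op_sum_list: "mono_op t (\<lambda>k. \<Sum>s\<leftarrow>L. f s k) i = (\<Sum>s\<leftarrow>L. mono_op t (f s) i)"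
  by (induction L) (auto simp: mono_op_def distrib_left split: prod.split)

lemma band_op_comp: "band_op L1 \<circ> band_op L2 = band_op (band_comp L1 L2)"
proof -
  have "band_op L1 (band_op L2 x) i = band_op (band_comp L1 L2) x i" for x i
    by (induction L1)
      (simp_all add: band_comp_def band_op_def mono_op_sum_list mono_op_comp o_def)
  then show ?thesis by (simp add: fun_eq_iff)
qed

lemma shift_pow_apply: "(shift ^^ n) x i = (if n \<le> i then x (i - n) else 0)"
  by (induction n arbitrary: i) (auto simp: shift_def)

lemma shift_adj_pow_apply: "(shift_adj ^^ m) x i = x (i + m)"
  by (induction m arbitrary: i) (auto simp: shift_adj_def)

lemma Tnm_apply: "Tnm n m x i = (if n \<le> i then x (i - n + m) else 0)"
  by (simp add: Tnm_def shift_pow_apply shift_adj_pow_apply)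

lemma Tnm_eq_band_op: "Tnm n m = band_op [(1, n, m)]"
  by (auto simp: fun_eq_iff Tnm_apply mono_op_def)

lemma toep_gen_imp_band_op: "B \<in> toep_gen \<Longrightarrow> \<exists>L. B = band_op L"
proof (induction rule: toep_gen.induct)
  case gen_T
  have "shift = band_op [(1, 1, 0)]" by (auto simp: fun_eq_iff shift_def mono_op_def)
  then show ?case by blast
next
  case gen_Tadj
  have "shift_adj = band_op [(1, 0, 1)]" by (auto simp: fun_eq_iff shift_adj_def mono_op_def)
  then show ?case by blast
next
  case (gen_add A B)
  then show ?case using band_op_append by metis
next
  case (gen_scale A c)
  then show ?case using op_scale_band_op by metis
next
  case (gen_mult A B)
  then show ?case using band_op_comp by metis
qed

lemma toep_til_gen_imp_band_op: "G \<in> toep_til_gen \<Longrightarrow> \<exists>L. G \<theta> = band_op L"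
proof (induction rule: toep_til_gen.induct)
  case (tgen_basic n m)
  show ?case unfolding Ttil_def Tnm_eq_band_op op_scale_band_op by blast
next
  case (tgen_add F G)
  then show ?case using band_op_append by metis
next
  case (tgen_scale F c)
  then show ?case using op_scale_band_op by metis
next
  case (tgen_mult F G)
  then show ?case using band_op_comp by metis
qed

lemma Tnm_l2:
  assumes "x \<in> l2"
  shows "Tnm a b x \<in> l2" "l2norm (Tnm a b x) \<le> l2norm x"
proof -
  have "L2_set (\<lambda>i. cmod (Tnm a b x i)) {..<N} \<le> l2norm x" for N
  proof -
    have "(\<Sum>i<N. (cmod (Tnm a b x i))\<^sup>2) = (\<Sum>i\<in>{a..<N}. (cmod (x (i - a + b)))\<^sup>2)"
      by (rule sum.mono_neutral_cong_right) (auto simp: Tnm_apply)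
    also have "\<dots> = (\<Sum>k\<in>(\<lambda>i. i - a + b) ` {a..<N}. (cmod (x k))\<^sup>2)"
      by (rule sum.reindex[symmetric, unfolded o_def]) (auto simp: inj_on_def)
    also have "\<dots> \<le> (l2norm x)\<^sup>2" by (rule sum_cmod_sq_le_l2norm_sq[OF assms]) auto
    finally show ?thesis
      using real_sqrt_le_mono by (fastforce simp: L2_set_cmod_eq l2norm_nonneg[OF assms])
  qed
  then show "Tnm a b x \<in> l2" "l2norm (Tnm a b x) \<le> l2norm x" by (rule l2_if_L2_set_bounded)+
qed

lemma bounded_op_Tnm: "bounded_op (Tnm a b)"
  unfolding bounded_op_def using Tnm_l2
  by (auto simp: fun_eq_iff Tnm_apply intro!: exI[of _ 1])

lemma bounded_op_band_op: "bounded_op (band_op L)"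
proof (induction L)
  case Nil
  have "band_op [] = (\<lambda>x i. 0)" by (simp add: fun_eq_iff)
  then show ?case unfolding bounded_op_def using l2_zero by (auto intro: exI[of _ 0])
next
  case (Cons t L)
  obtain c a b where t: "t = (c, a, b)" by (cases t) auto
  have "band_op (t # L) = op_add (op_scale c (Tnm a b)) (band_op L)"
    by (auto simp: fun_eq_iff op_add_def op_scale_def mono_op_def Tnm_apply t)
  then show ?case by (simp add: bounded_op_op_add bounded_op_op_scale bounded_op_Tnm Cons)
qed

lemma band_op_width:
  fixes L :: "(complex \<times> nat \<times> nat) list"
  shows "\<exists>M. \<forall>(c, a, b)\<in>set L. a \<le> M \<and> b \<le> M"
proof (induction L)
  case (Cons t L)
  then obtain M where "\<forall>(c, a, b)\<in>set L. a \<le> M \<and> b \<le> M" by blast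
  then show ?case
    by (cases t) (auto intro!: exI[of _ "M + fst (snd t) + snd (snd t)"])
qed simp

lemma band_op_shift_rows:
  assumes "\<forall>(c, a, b)\<in>set L. a \<le> i"
  shows "band_op L (Tnm n 0 y) (i + n) = band_op L y i"
  using assms by (induction L) (auto simp: mono_op_def Tnm_apply)

lemma band_op_local:
  assumes "\<forall>(c, a, b)\<in>set L. b \<le> M" "\<And>k. k \<le> i + M \<Longrightarrow> y k = z k"
  shows "band_op L y i = band_op L z i"
  using assms by (induction L) (auto simp: mono_op_def)

lemma band_op_basis_vec_eventually_zero: "\<exists>M. \<forall>j>M. band_op L (basis_vec j) i = 0"
proof (induction L)
  case (Cons t L)
  then obtain M where "\<forall>j>M. band_op L (basis_vec j) i = 0" by blast
  then have "\<forall>j>max M (i + snd (snd t)). band_op (t # L) (basis_vec j) i = 0"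
    by (cases t) (auto simp: mono_op_def basis_vec_def)
  then show ?case by blast
qed simp

lemma band_op_coord_tendsto_zero:
  assumes "\<And>k. (\<lambda>j. ys j k) \<longlonglongrightarrow> 0"
  shows "(\<lambda>j. band_op L (ys j) i) \<longlonglongrightarrow> 0"
proof (induction L)
  case (Cons t L)
  obtain c a b where t: "t = (c, a, b)" by (cases t) auto
  have "(\<lambda>j. mono_op t (ys j) i) \<longlonglongrightarrow> 0"
    using tendsto_mult[OF tendsto_const assms, of c] by (cases "a \<le> i") (simp_all add: t mono_op_def)
  with Cons show ?case by (simp add: tendsto_add_zero)
qed simp

lemma toeplitz_bounded_op: "A \<in> toeplitz \<Longrightarrow> bounded_op A"
  by (simp add: toeplitz_def)

lemma toeplitz_approx_band_op:
  assumes "A \<in> toeplitz" "e > 0"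
  obtains L where "opnorm (op_diff A (band_op L)) < e"
  using assms toep_gen_imp_band_op unfolding toeplitz_def by blast

section \<open>Fourier coefficients pick out diagonals\<close>

definition gauge_action :: "real \<Rightarrow> vec \<Rightarrow> vec" where
  "gauge_action \<theta> x = (\<lambda>k. exp (\<i> * of_real (real k * \<theta>)) * x k)"

lemma toep_til_gen_gauge:
  assumes "G \<in> toep_til_gen"
  shows "G \<theta> x i = exp (- (\<i> * of_real (real i * \<theta>))) * G 0 (gauge_action \<theta> x) i"
  using assms
proof (induction arbitrary: x i rule: toep_til_gen.induct)
  case (tgen_basic n m)
  show ?case
  proof (cases "n \<le> i")
    case True
    have "exp (- (\<i> * of_real (real i * \<theta>))) * exp (\<i> * of_real (real (i - n + m) * \<theta>)) =
        exp (\<i> * of_real ((real m - real n) * \<theta>))"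
      unfolding mult_exp_exp using True by (intro arg_cong[where f = exp]) (simp add: algebra_simps)
    then show ?thesis
      using True by (simp add: Ttil_def op_scale_def Tnm_apply gauge_action_def mult.assoc[symmetric])
  qed (simp add: Ttil_def op_scale_def Tnm_apply)
next
  case (tgen_mult F G)
  have "gauge_action \<theta> (G \<theta> x) = G 0 (gauge_action \<theta> x)"
    unfolding tgen_mult.IH(2) by (simp add: gauge_action_def exp_minus fun_eq_iff)
  then show ?case using tgen_mult.IH(1)[of "G \<theta> x"] by simp
qed (simp_all add: op_add_def op_scale_def algebra_simps)

lemma toep_til_gen_matrix_entry:
  assumes "G \<in> toep_til_gen"
  shows "G \<theta> (basis_vec j) i = exp (\<i> * of_real ((real j - real i) * \<theta>)) * G 0 (basis_vec j) i"
proof -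
  obtain L where L: "G 0 = band_op L" using toep_til_gen_imp_band_op[OF assms] by blast
  have rot: "gauge_action \<theta> (basis_vec j) = (\<lambda>k. exp (\<i> * of_real (real j * \<theta>)) * basis_vec j k)"
    by (auto simp: gauge_action_def basis_vec_def)
  have "G \<theta> (basis_vec j) i =
      exp (- (\<i> * of_real (real i * \<theta>))) * (exp (\<i> * of_real (real j * \<theta>)) * G 0 (basis_vec j) i)"
    unfolding toep_til_gen_gauge[OF assms] rot L band_op_scale_vec ..
  also have "exp (- (\<i> * of_real (real i * \<theta>))) * exp (\<i> * of_real (real j * \<theta>)) =
      exp (\<i> * of_real ((real j - real i) * \<theta>))"
    unfolding mult_exp_exp by (intro arg_cong[where f = exp]) (simp add: algebra_simps)
  ultimately show ?thesis by (simp only: mult.assoc[symmetric])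
qed

lemma toep_til_matrix_entry:
  assumes F: "F \<in> toep_til"
  shows "F \<theta> (basis_vec j) i = exp (\<i> * of_real ((real j - real i) * \<theta>)) * F 0 (basis_vec j) i"
proof -
  let ?E = "exp (\<i> * of_real ((real j - real i) * \<theta>))"
  have bF: "bounded_op (F t)" for t
    using F by (simp add: toep_til_def C_circle_toep_def toeplitz_def)
  have "cmod (F \<theta> (basis_vec j) i - ?E * F 0 (basis_vec j) i) \<le> 0 + e" if "e > 0" for e
  proof -
    have "e / 2 > 0" using \<open>e > 0\<close> by simp
    then obtain G where G: "G \<in> toep_til_gen" "\<And>t. opnorm (op_diff (F t) (G t)) < e / 2"
      using F unfolding toep_til_def by blast
    have bG: "bounded_op (G t)" for t
      using toep_til_gen_imp_band_op[OF G(1)] bounded_op_band_op by metis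
    have close: "cmod (F t (basis_vec j) i - G t (basis_vec j) i) \<le> e / 2" for t
      using cmod_diff_le_opnorm_bound[OF bF bG G(2) basis_vec_l2(1)] basis_vec_l2(2) by simp
    have "F \<theta> (basis_vec j) i - ?E * F 0 (basis_vec j) i =
        (F \<theta> (basis_vec j) i - G \<theta> (basis_vec j) i) + ?E * (G 0 (basis_vec j) i - F 0 (basis_vec j) i)"
      unfolding toep_til_gen_matrix_entry[OF G(1), of \<theta>] by (simp add: algebra_simps)
    also have "cmod \<dots> \<le> cmod (F \<theta> (basis_vec j) i - G \<theta> (basis_vec j) i) + cmod (G 0 (basis_vec j) i - F 0 (basis_vec j) i)"
      using norm_triangle_ineq[of "F \<theta> (basis_vec j) i - G \<theta> (basis_vec j) i" "?E * (G 0 (basis_vec j) i - F 0 (basis_vec j) i)"]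
      by (simp only: norm_mult norm_exp_i_times mult_1)
    also have "\<dots> \<le> e / 2 + e / 2"
      using close[of \<theta>] close[of 0] by (simp add: norm_minus_commute)
    finally show ?thesis by simp
  qed
  then have "cmod (F \<theta> (basis_vec j) i - ?E * F 0 (basis_vec j) i) \<le> 0" by (rule field_le_epsilon)
  then show ?thesis by simp
qed

lemma integral_exp_int_period:
  "integral {0..2*pi} (\<lambda>\<theta>. exp (\<i> * of_real (real_of_int n * \<theta>))) =
    (if n = 0 then complex_of_real (2*pi) else 0)"
proof (cases "n = 0")
  case False
  define f where "f = (\<lambda>z::complex. exp (\<i> * of_int n * z) / (\<i> * of_int n))"
  have "((\<lambda>\<theta>. exp (\<i> * of_real (real_of_int n * \<theta>))) has_integral (f (of_real (2*pi)) - f (of_real 0))) {0..2*pi}"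
  proof (rule fundamental_theorem_of_calculus)
    fix x :: real
    have "(f has_field_derivative exp (\<i> * of_int n * z)) (at z)" for z
      unfolding f_def using False by (auto intro!: derivative_eq_intros)
    from has_vector_derivative_real_field[OF this]
    show "((\<lambda>x. f (of_real x)) has_vector_derivative exp (\<i> * of_real (real_of_int n * x)))
        (at x within {0..2*pi})"
      by (simp add: mult.assoc)
  qed simp
  moreover have "f (of_real (2*pi)) = f (of_real 0)"
    using exp_2pi_1_int[of n] by (simp add: f_def algebra_simps)
  ultimately show ?thesis using False by (simp add: integral_unique)
qed (simp add: scaleR_conv_of_real)

lemma fourier_coeff_matrix_entry:
  assumes F: "F \<in> toep_til"
  shows "fourier_coeff F k (basis_vec j) i = (if int j - int i = k then F 0 (basis_vec j) i else 0)"
proof -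
  let ?a = "F 0 (basis_vec j) i"
  have "F \<theta> (basis_vec j) i * exp (- \<i> * of_real (real_of_int k * \<theta>)) =
      ?a * exp (\<i> * of_real (real_of_int (int j - int i - k) * \<theta>))" for \<theta>
  proof -
    have "exp (\<i> * of_real ((real j - real i) * \<theta>)) * exp (- \<i> * of_real (real_of_int k * \<theta>)) =
        exp (\<i> * of_real (real_of_int (int j - int i - k) * \<theta>))"
      unfolding mult_exp_exp by (intro arg_cong[where f = exp]) (simp add: algebra_simps)
    then show ?thesis unfolding toep_til_matrix_entry[OF F, of \<theta>] by (simp add: ac_simps)
  qed
  then have "fourier_coeff F k (basis_vec j) i = complex_of_real (1 / (2 * pi)) *
      (?a * integral {0..2*pi} (\<lambda>\<theta>. exp (\<i> * of_real (real_of_int (int j - int i - k) * \<theta>))))"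
    by (simp add: fourier_coeff_def)
  then show ?thesis unfolding integral_exp_int_period by simp
qed

section \<open>The series condition in terms of matrix entries\<close>

text \<open>\<open>A (basis_vec j) i\<close> is the \<open>(i, j)\<close> entry of the matrix of \<open>A\<close>.\<close>
definition diagonals_vanish :: "oper \<Rightarrow> bool" where
  "diagonals_vanish A \<longleftrightarrow> (\<forall>d.
     (\<lambda>j. A (basis_vec j) (j + d)) \<longlonglongrightarrow> 0 \<and> (\<lambda>j. A (basis_vec (j + d)) j) \<longlonglongrightarrow> 0)"

text \<open>\<open>T(n, n)\<close> is the projection onto the span of the \<open>e_i\<close> with \<open>i \<ge> n\<close>, so the
  \<open>j\<close>-th coordinate of \<open>\<Sum>n<N. b n T(n, n) e_j\<close> is the partial sum \<open>\<Sum>n\<le>j. b n\<close> once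
  \<open>N > j\<close>.\<close>
lemma diag_series_limit_coord:
  assumes "l2_tendsto (\<lambda>N i. \<Sum>n<N. b n * Tnm n n (basis_vec j) i) y"
  shows "y j = (\<Sum>n<Suc j. b n)"
proof -
  have "(\<Sum>n<N. b n * Tnm n n (basis_vec j) j) = (\<Sum>n<Suc j. b n)" if "N \<ge> Suc j" for N
  proof -
    have "(\<Sum>n<N. b n * Tnm n n (basis_vec j) j) = (\<Sum>n<N. if n < Suc j then b n else 0)"
      by (rule sum.cong) (auto simp: Tnm_apply basis_vec_def)
    also have "\<dots> = (\<Sum>n<Suc j. b n)"
      using that by (intro sum.mono_neutral_cong_right) auto
    finally show ?thesis .
  qed
  then have "eventually (\<lambda>N. (\<Sum>n<N. b n * Tnm n n (basis_vec j) j) = (\<Sum>n<Suc j. b n)) sequentially"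
    unfolding eventually_sequentially by blast
  with l2_tendsto_coord[OF assms, of j] have "(\<lambda>N. \<Sum>n<Suc j. b n) \<longlonglongrightarrow> y j"
    by (simp add: Lim_transform_eventually)
  then show ?thesis using LIMSEQ_unique tendsto_const by blast
qed

lemma series_form_lower_partial_sum:
  assumes F: "F \<in> toep_til" and form: "series_form b (- int d) (fourier_coeff F (- int d))"
  shows "(\<Sum>n<Suc j. b n) = F 0 (basis_vec j) (j + d)"
proof -
  obtain y where y: "l2_tendsto (\<lambda>N i. \<Sum>n<N. b n * Tnm n n (basis_vec j) i) y"
     "fourier_coeff F (- int d) (basis_vec j) = Tnm d 0 y"
    using bspec[OF form[unfolded series_form_def] basis_vec_l2(1)[of j]] by auto
  have "y j = fourier_coeff F (- int d) (basis_vec j) (j + d)" unfolding y(2) by (simp add: Tnm_apply)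
  also have "\<dots> = F 0 (basis_vec j) (j + d)" unfolding fourier_coeff_matrix_entry[OF F] by simp
  finally show ?thesis using diag_series_limit_coord[OF y(1)] by simp
qed

lemma series_form_upper_partial_sum:
  assumes F: "F \<in> toep_til" and form: "series_form b (int d) (fourier_coeff F (int d))" and "d > 0"
  shows "(\<Sum>n<Suc j. b n) = F 0 (basis_vec (j + d)) j"
proof -
  have "Tnm 0 d (basis_vec (j + d)) = basis_vec j" by (auto simp: fun_eq_iff Tnm_apply basis_vec_def)
  then have "l2_tendsto (\<lambda>N i. \<Sum>n<N. b n * Tnm n n (basis_vec j) i) (fourier_coeff F (int d) (basis_vec (j + d)))"
    using bspec[OF form[unfolded series_form_def] basis_vec_l2(1)[of "j + d"]] \<open>d > 0\<close> by simp
  from diag_series_limit_coord[OF this] show ?thesis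
    unfolding fourier_coeff_matrix_entry[OF F] by simp
qed

lemma series_coeffs_sums_zero_iff_diagonals_vanish:
  assumes "series_coeffs A \<beta>"
  shows "(\<forall>k. \<beta> k sums 0) \<longleftrightarrow> diagonals_vanish A"
proof -
  obtain F where F: "F \<in> toep_til" "\<And>x. x \<in> l2 \<Longrightarrow> F 0 x = A x"
    and form: "\<And>k. series_form (\<beta> k) k (fourier_coeff F k)"
    using assms unfolding series_coeffs_def by blast
  have sums_iff: "\<beta> k sums 0 \<longleftrightarrow> (\<lambda>j. \<Sum>n<Suc j. \<beta> k n) \<longlonglongrightarrow> 0" for k
    using filterlim_sequentially_Suc[of "\<lambda>n. sum (\<beta> k) {..<n}"] by (simp add: sums_def)
  have lower: "\<beta> (- int d) sums 0 \<longleftrightarrow> (\<lambda>j. A (basis_vec j) (j + d)) \<longlonglongrightarrow> 0" for d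
    unfolding sums_iff series_form_lower_partial_sum[OF F(1) form] F(2)[OF basis_vec_l2(1)] ..
  have upper: "\<beta> (int d) sums 0 \<longleftrightarrow> (\<lambda>j. A (basis_vec (j + d)) j) \<longlonglongrightarrow> 0" if "d > 0" for d
    unfolding sums_iff series_form_upper_partial_sum[OF F(1) form that] F(2)[OF basis_vec_l2(1)] ..
  have "(\<forall>k. \<beta> k sums 0) \<longleftrightarrow> (\<forall>d. \<beta> (- int d) sums 0 \<and> (d > 0 \<longrightarrow> \<beta> (int d) sums 0))"
    (is "_ \<longleftrightarrow> (\<forall>d. ?P d)")
  proof (intro iffI allI)
    fix k :: int
    assume "\<forall>d. ?P d"
    then show "\<beta> k sums 0"
      using spec[of ?P "nat (- k)"] spec[of ?P "nat k"] by (cases "k \<le> 0") auto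
  qed simp
  also have "\<dots> \<longleftrightarrow> diagonals_vanish A"
  proof -
    have "?P d \<longleftrightarrow> (\<lambda>j. A (basis_vec j) (j + d)) \<longlonglongrightarrow> 0 \<and> (\<lambda>j. A (basis_vec (j + d)) j) \<longlonglongrightarrow> 0" for d
      using lower[of d] upper[of d] by (cases "d = 0") auto
    then show ?thesis unfolding diagonals_vanish_def by blast
  qed
  finally show ?thesis .
qed

section \<open>Compactness in terms of the diagonals\<close>

lemma toeplitz_row_tendsto_zero:
  assumes "A \<in> toeplitz"
  shows "(\<lambda>j. A (basis_vec j) i) \<longlonglongrightarrow> 0"
proof (rule LIMSEQ_I)
  fix r :: real
  assume "r > 0"
  then obtain L where L: "opnorm (op_diff A (band_op L)) < r / 2"
    using toeplitz_approx_band_op[OF assms, of "r / 2"] by auto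
  obtain M where M: "\<forall>j>M. band_op L (basis_vec j) i = 0"
    using band_op_basis_vec_eventually_zero by blast
  have small: "cmod (A (basis_vec j) i) \<le> r / 2" if "j > M" for j
  proof -
    have "cmod (A (basis_vec j) i - band_op L (basis_vec j) i) \<le> r / 2"
      using cmod_diff_le_opnorm_bound[OF toeplitz_bounded_op[OF assms] bounded_op_band_op L basis_vec_l2(1)]
      by (simp add: basis_vec_l2(2))
    then show ?thesis using M that by simp
  qed
  have "norm (A (basis_vec n) i - 0) < r" if "n \<ge> Suc M" for n
    using small[of n] that \<open>r > 0\<close> by simp
  then show "\<exists>no. \<forall>n\<ge>no. norm (A (basis_vec n) i - 0) < r" by blast
qed

text \<open>Since \<open>e_j \<rightarrow> 0\<close> weakly, the only possible limit of a subsequence of \<open>A e_j\<close> is \<open>0\<close>.\<close>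
lemma compact_op_basis_vec_norm_tendsto_zero:
  assumes compact: "compact_op A" and rows: "\<And>i. (\<lambda>j. A (basis_vec j) i) \<longlonglongrightarrow> 0"
  shows "(\<lambda>j. l2norm (A (basis_vec j))) \<longlonglongrightarrow> 0"
proof (rule ccontr)
  assume "\<not> ?thesis"
  then obtain r where "r > 0" and unbounded: "\<forall>no. \<exists>n\<ge>no. \<not> norm (l2norm (A (basis_vec n)) - 0) < r"
    using LIMSEQ_I by metis
  have "0 \<le> l2norm (A (basis_vec n))" for n
    using compact basis_vec_l2(1) by (simp add: compact_op_def bounded_op_l2 l2norm_nonneg)
  then have "\<forall>no. \<exists>n\<ge>no. r \<le> l2norm (A (basis_vec n))"
    using unbounded by (metis abs_of_nonneg diff_zero not_less real_norm_def)
  then have "infinite {n. r \<le> l2norm (A (basis_vec n))}"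
    unfolding infinite_nat_iff_unbounded_le by blast
  then obtain s :: "nat \<Rightarrow> nat" where s: "strict_mono s" "\<And>n. r \<le> l2norm (A (basis_vec (s n)))"
    using infinite_enumerate by blast
  have "(\<forall>j. basis_vec (s j) \<in> l2) \<and> (\<exists>M. \<forall>j. l2norm (basis_vec (s j)) \<le> M)"
    using basis_vec_l2 by auto
  then obtain q y where q: "strict_mono q" and lim: "l2_tendsto (\<lambda>j. A (basis_vec (s (q j)))) y"
    using compact[unfolded compact_op_def, THEN conjunct2, rule_format, of "\<lambda>j. basis_vec (s j)"] by auto
  have "y i = 0" for i
  proof -
    have "((\<lambda>j. A (basis_vec j) i) \<circ> s \<circ> q) \<longlonglongrightarrow> 0"
      by (intro LIMSEQ_subseq_LIMSEQ rows s(1) q)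
    with l2_tendsto_coord[OF lim, of i] show ?thesis using LIMSEQ_unique by (auto simp: o_def)
  qed
  then have "vdiff (A (basis_vec (s (q j)))) y = A (basis_vec (s (q j)))" for j
    by (auto simp: vdiff_def)
  then have "(\<lambda>j. l2norm (A (basis_vec (s (q j))))) \<longlonglongrightarrow> 0"
    using lim unfolding l2_tendsto_def by simp
  then have "r \<le> 0" using s(2) by (intro LIMSEQ_le_const) auto
  then show False using \<open>r > 0\<close> by simp
qed

lemma compact_imp_diagonals_vanish:
  assumes "compact_op A" "A \<in> toeplitz"
  shows "diagonals_vanish A"
  unfolding diagonals_vanish_def
proof (intro allI conjI)
  fix d
  have bA: "bounded_op A" using assms(2) by (rule toeplitz_bounded_op)
  have lim: "(\<lambda>j. l2norm (A (basis_vec j))) \<longlonglongrightarrow> 0"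
    using compact_op_basis_vec_norm_tendsto_zero[OF assms(1) toeplitz_row_tendsto_zero[OF assms(2)]] .
  have entry_le: "norm (A (basis_vec j) i) \<le> l2norm (A (basis_vec j))" for i j
    by (rule cmod_coord_le_l2norm[OF bounded_op_l2[OF bA basis_vec_l2(1)]])
  show "(\<lambda>j. A (basis_vec j) (j + d)) \<longlonglongrightarrow> 0"
    using entry_le by (intro Lim_null_comparison[OF _ lim]) auto
  show "(\<lambda>j. A (basis_vec (j + d)) j) \<longlonglongrightarrow> 0"
    using entry_le by (intro Lim_null_comparison[OF _ LIMSEQ_ignore_initial_segment[OF lim, of d]]) auto
qed

lemma L2_set_cmod_tendsto_zero:
  assumes "\<And>i. i \<in> S \<Longrightarrow> (\<lambda>n. f n i) \<longlonglongrightarrow> 0"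
  shows "(\<lambda>n. L2_set (\<lambda>i. cmod (f n i)) S) \<longlonglongrightarrow> 0"
proof -
  have "(\<lambda>n. (cmod (f n i))\<^sup>2) \<longlonglongrightarrow> 0" if "i \<in> S" for i
    using tendsto_power[OF tendsto_norm_zero[OF assms[OF that]], of 2] by simp
  then have "(\<lambda>n. \<Sum>i\<in>S. (cmod (f n i))\<^sup>2) \<longlonglongrightarrow> (\<Sum>i\<in>S. 0)"
    by (rule tendsto_sum)
  then have "(\<lambda>n. sqrt (\<Sum>i\<in>S. (cmod (f n i))\<^sup>2)) \<longlonglongrightarrow> sqrt 0"
    by (intro tendsto_real_sqrt) simp
  then show ?thesis by (simp add: L2_set_cmod_eq)
qed

lemma L2_set_cmod_le_diff_plus:
  "L2_set (\<lambda>i. cmod (f i)) S \<le> L2_set (\<lambda>i. cmod (f i - g i)) S + L2_set (\<lambda>i. cmod (g i)) S"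
proof -
  have "L2_set (\<lambda>i. cmod (f i)) S \<le> L2_set (\<lambda>i. cmod (f i - g i) + cmod (g i)) S"
    by (rule L2_set_mono) (auto simp: add.commute norm_triangle_sub)
  also have "\<dots> \<le> L2_set (\<lambda>i. cmod (f i - g i)) S + L2_set (\<lambda>i. cmod (g i)) S"
    by (rule L2_set_triangle_ineq)
  finally show ?thesis .
qed

lemma L2_set_lessThan_le_split:
  fixes f :: "nat \<Rightarrow> real"
  shows "L2_set f {..<N} \<le> L2_set f {..<M} + L2_set f {M..<N}"
proof (cases "N \<le> M")
  case True
  then have "L2_set f {..<N} \<le> L2_set f {..<M}"
    unfolding L2_set_def by (intro real_sqrt_le_mono sum_mono2) auto
  then show ?thesis using L2_set_nonneg[of f "{M..<N}"] by linarith
next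
  case False
  then have split: "{..<N} = {..<M} \<union> {M..<N}" by auto
  have "L2_set f {..<N} = sqrt ((\<Sum>i<M. (f i)\<^sup>2) + (\<Sum>i\<in>{M..<N}. (f i)\<^sup>2))"
    unfolding L2_set_def split by (subst sum.union_disjoint) auto
  also have "\<dots> \<le> sqrt (\<Sum>i<M. (f i)\<^sup>2) + sqrt (\<Sum>i\<in>{M..<N}. (f i)\<^sup>2)"
    by (rule sqrt_add_le_add_sqrt) (auto intro: sum_nonneg)
  finally show ?thesis unfolding L2_set_def .
qed

lemma Tnm_shift_finite_support:
  assumes "\<And>k. k \<ge> K \<Longrightarrow> y k = 0"
  shows "Tnm n 0 y = (\<lambda>k. \<Sum>j<K. y j * basis_vec (j + n) k)"
proof
  fix k
  show "Tnm n 0 y k = (\<Sum>j<K. y j * basis_vec (j + n) k)"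
  proof (cases "n \<le> k")
    case True
    have "(\<Sum>j<K. y j * basis_vec (j + n) k) = (\<Sum>j<K. if j = k - n then y j else 0)"
      using True by (intro sum.cong) (auto simp: basis_vec_def)
    also have "\<dots> = y (k - n)" using assms[of "k - n"] by (auto simp: sum.delta')
    finally show ?thesis using True by (simp add: Tnm_apply)
  qed (simp add: Tnm_apply basis_vec_def)
qed

lemma diagonals_vanish_shifted_entry:
  assumes "diagonals_vanish A"
  shows "(\<lambda>n. A (basis_vec (j + n)) (i + n)) \<longlonglongrightarrow> 0"
proof (cases "j \<le> i")
  case True
  have "(\<lambda>n. A (basis_vec (n + j)) (n + j + (i - j))) \<longlonglongrightarrow> 0"
    using assms LIMSEQ_ignore_initial_segment unfolding diagonals_vanish_def by blast
  then show ?thesis using True by (simp add: add.commute)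
next
  case False
  have "(\<lambda>n. A (basis_vec (n + i + (j - i))) (n + i)) \<longlonglongrightarrow> 0"
    using assms LIMSEQ_ignore_initial_segment unfolding diagonals_vanish_def by blast
  then show ?thesis using False by (simp add: add.commute)
qed

lemma diagonals_vanish_shift_tendsto_zero:
  assumes "bounded_op A" "diagonals_vanish A" "\<And>k. k \<ge> K \<Longrightarrow> y k = 0"
  shows "(\<lambda>n. A (Tnm n 0 y) (i + n)) \<longlonglongrightarrow> 0"
proof -
  have "A (Tnm n 0 y) = (\<lambda>k. \<Sum>j<K. y j * A (basis_vec (j + n)) k)" for n
    using bounded_op_sum(2)[OF assms(1), where N = K and v = "\<lambda>j. basis_vec (j + n)" and c = y]
    by (simp add: Tnm_shift_finite_support[OF assms(3)] basis_vec_l2(1))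
  moreover have "(\<lambda>n. \<Sum>j<K. y j * A (basis_vec (j + n)) (i + n)) \<longlonglongrightarrow> (\<Sum>j<K. y j * 0)"
    by (intro tendsto_intros diagonals_vanish_shifted_entry[OF assms(2)])
  ultimately show ?thesis by simp
qed

lemma band_op_tail_le_finite_support:
  assumes bA: "bounded_op A" and diag: "diagonals_vanish A"
    and L: "opnorm (op_diff A (band_op L)) < e" and "e > 0"
    and width: "\<forall>(c, a, b)\<in>set L. a \<le> M"
    and y: "y \<in> l2" and fin: "\<And>k. k \<ge> K \<Longrightarrow> y k = 0"
  shows "L2_set (\<lambda>i. cmod (band_op L y i)) {M..<R} \<le> e * l2norm y"
proof -
  let ?tail = "L2_set (\<lambda>i. cmod (band_op L y i)) {M..<R}"
  define g where "g n = L2_set (\<lambda>i. cmod (A (Tnm n 0 y) (i + n))) {M..<R}" for n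
  have "?tail \<le> e * l2norm y + g n" for n
  proof -
    let ?z = "Tnm n 0 y"
    have z: "?z \<in> l2" "l2norm ?z \<le> l2norm y" using Tnm_l2[OF y] by auto
    have "band_op L ?z (i + n) = band_op L y i" if "i \<in> {M..<R}" for i
      using width that by (intro band_op_shift_rows) auto
    then have "?tail = L2_set (\<lambda>i. cmod (band_op L ?z (i + n))) {M..<R}"
      by (intro L2_set_cong) auto
    also have "\<dots> \<le> L2_set (\<lambda>i. cmod (band_op L ?z (i + n) - A ?z (i + n))) {M..<R} + g n"
      unfolding g_def by (rule L2_set_cmod_le_diff_plus)
    also have "L2_set (\<lambda>i. cmod (band_op L ?z (i + n) - A ?z (i + n))) {M..<R} \<le> l2norm (\<lambda>k. A ?z k - band_op L ?z k)"
      using L2_set_shift_le_l2norm[OF l2_diff(1)[OF bounded_op_l2[OF bA z(1)] bounded_op_l2[OF bounded_op_band_op z(1)]]]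
      by (simp add: norm_minus_commute)
    also have "\<dots> \<le> e * l2norm ?z" by (rule l2norm_diff_le_opnorm_bound[OF bA bounded_op_band_op L z(1)])
    also have "\<dots> \<le> e * l2norm y" using z(2) \<open>e > 0\<close> by simp
    finally show ?thesis by simp
  qed
  moreover have "(\<lambda>n. e * l2norm y + g n) \<longlonglongrightarrow> e * l2norm y + 0"
    unfolding g_def by (intro tendsto_intros L2_set_cmod_tendsto_zero diagonals_vanish_shift_tendsto_zero[OF bA diag fin])
  ultimately show ?thesis by (intro LIMSEQ_le_const) auto
qed

lemma band_op_tail_le:
  assumes bA: "bounded_op A" and diag: "diagonals_vanish A"
    and L: "opnorm (op_diff A (band_op L)) < e" and "e > 0"
    and width: "\<forall>(c, a, b)\<in>set L. a \<le> M \<and> b \<le> M" and y: "y \<in> l2"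
  shows "L2_set (\<lambda>i. cmod (band_op L y i)) {M..<R} \<le> e * l2norm y"
proof -
  define y' where "y' = (\<lambda>k. if k < R + M then y k else 0)"
  have "L2_set (\<lambda>i. cmod (y' i)) {..<N} \<le> l2norm y" for N
  proof -
    have "L2_set (\<lambda>i. cmod (y' i)) {..<N} \<le> L2_set (\<lambda>i. cmod (y i)) {..<N}"
      by (rule L2_set_mono) (auto simp: y'_def)
    also have "\<dots> \<le> l2norm y" by (rule L2_set_le_l2norm[OF y]) simp
    finally show ?thesis .
  qed
  then have y': "y' \<in> l2" "l2norm y' \<le> l2norm y" by (rule l2_if_L2_set_bounded)+
  have "band_op L y i = band_op L y' i" if "i < R" for i
    using width that by (intro band_op_local[of L M]) (auto simp: y'_def)
  then have "L2_set (\<lambda>i. cmod (band_op L y i)) {M..<R} = L2_set (\<lambda>i. cmod (band_op L y' i)) {M..<R}"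
    by (intro L2_set_cong) auto
  also have "\<dots> \<le> e * l2norm y'"
    using width by (intro band_op_tail_le_finite_support[OF bA diag L \<open>e > 0\<close> _ y'(1), of _ "R + M"])
      (auto simp: y'_def)
  also have "\<dots> \<le> e * l2norm y" using y'(2) \<open>e > 0\<close> by simp
  finally show ?thesis .
qed

lemma l2norm_le_band_op_head:
  assumes bA: "bounded_op A" and diag: "diagonals_vanish A"
    and L: "opnorm (op_diff A (band_op L)) < e" and "e > 0"
    and width: "\<forall>(c, a, b)\<in>set L. a \<le> M \<and> b \<le> M" and y: "y \<in> l2"
  shows "l2norm (A y) \<le> L2_set (\<lambda>i. cmod (band_op L y i)) {..<M} + 2 * e * l2norm y"
proof -
  have Ay: "A y \<in> l2" and By: "band_op L y \<in> l2"
    using bounded_op_l2[OF bA y] bounded_op_l2[OF bounded_op_band_op y] .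
  have "l2norm (A y) \<le> l2norm (\<lambda>i. A y i - band_op L y i) + l2norm (band_op L y)"
    using l2_add(2)[OF l2_diff(1)[OF Ay By] By] by simp
  moreover have "l2norm (\<lambda>i. A y i - band_op L y i) \<le> e * l2norm y"
    by (rule l2norm_diff_le_opnorm_bound[OF bA bounded_op_band_op L y])
  moreover have "l2norm (band_op L y) \<le> L2_set (\<lambda>i. cmod (band_op L y i)) {..<M} + e * l2norm y"
  proof (rule l2_if_L2_set_bounded(2))
    fix N
    show "L2_set (\<lambda>i. cmod (band_op L y i)) {..<N} \<le>
        L2_set (\<lambda>i. cmod (band_op L y i)) {..<M} + e * l2norm y"
      using L2_set_lessThan_le_split band_op_tail_le[OF bA diag L \<open>e > 0\<close> width y]
      by (rule order_trans[OF _ add_left_mono])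
  qed
  ultimately show ?thesis by linarith
qed

lemma diagonals_vanish_norm_tendsto_zero:
  assumes A: "A \<in> toeplitz" and diag: "diagonals_vanish A"
    and ys: "\<And>j. ys j \<in> l2" "\<And>j. l2norm (ys j) \<le> K" "\<And>i. (\<lambda>j. ys j i) \<longlonglongrightarrow> 0"
  shows "(\<lambda>j. l2norm (A (ys j))) \<longlonglongrightarrow> 0"
proof (rule LIMSEQ_I)
  fix r :: real
  assume "r > 0"
  have bA: "bounded_op A" using A by (rule toeplitz_bounded_op)
  have "K \<ge> 0" using l2norm_nonneg[OF ys(1), of 0] ys(2)[of 0] by linarith
  define e where "e = r / (2 * K + 3)"
  have "e > 0" using \<open>r > 0\<close> \<open>K \<ge> 0\<close> by (simp add: e_def)
  have er: "e * (2 * K + 1) < r"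
    using \<open>r > 0\<close> \<open>K \<ge> 0\<close> by (simp add: e_def field_simps)
  obtain L where L: "opnorm (op_diff A (band_op L)) < e"
    using toeplitz_approx_band_op[OF A \<open>e > 0\<close>] by blast
  obtain M where width: "\<forall>(c, a, b)\<in>set L. a \<le> M \<and> b \<le> M"
    using band_op_width by blast
  define head where "head j = L2_set (\<lambda>i. cmod (band_op L (ys j) i)) {..<M}" for j
  have "head \<longlonglongrightarrow> 0"
    unfolding head_def by (intro L2_set_cmod_tendsto_zero band_op_coord_tendsto_zero ys(3))
  then obtain no where "\<forall>j\<ge>no. norm (head j - 0) < e"
    using LIMSEQ_D[OF _ \<open>e > 0\<close>] by blast
  then have no: "head j < e" if "j \<ge> no" for j
    using that by auto
  have "norm (l2norm (A (ys j)) - 0) < r" if "j \<ge> no" for j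
  proof -
    have "l2norm (A (ys j)) \<le> head j + 2 * e * l2norm (ys j)"
      unfolding head_def by (rule l2norm_le_band_op_head[OF bA diag L \<open>e > 0\<close> width ys(1)])
    also have "\<dots> < e * (2 * K + 1)"
      using no[OF that] mult_left_mono[OF ys(2) less_imp_le[OF \<open>e > 0\<close>], of j]
      by (simp add: algebra_simps)
    finally show ?thesis
      using er l2norm_nonneg[OF bounded_op_l2[OF bA ys(1)]] by simp
  qed
  then show "\<exists>no. \<forall>n\<ge>no. norm (l2norm (A (ys n)) - 0) < r" by blast
qed

lemma diagonals_vanish_imp_compact_op:
  assumes A: "A \<in> toeplitz" and diag: "diagonals_vanish A"
  shows "compact_op A"
  unfolding compact_op_def
proof (intro conjI allI impI)
  show bA: "bounded_op A" using A by (rule toeplitz_bounded_op)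
  fix xs :: "nat \<Rightarrow> vec"
  assume "(\<forall>j. xs j \<in> l2) \<and> (\<exists>M. \<forall>j. l2norm (xs j) \<le> M)"
  then obtain K where xs: "\<And>j. xs j \<in> l2" "\<And>j. l2norm (xs j) \<le> K" by blast
  obtain r z where r: "strict_mono r" and z: "z \<in> l2" "l2norm z \<le> K"
    and lim: "\<And>i. (\<lambda>j. xs (r j) i) \<longlonglongrightarrow> z i"
    by (rule l2_bounded_coordwise_convergent_subseq[of xs K]) (auto simp: xs)
  have "(\<lambda>j. l2norm (A (vdiff (xs (r j)) z))) \<longlonglongrightarrow> 0"
  proof (rule diagonals_vanish_norm_tendsto_zero[OF A diag])
    show "vdiff (xs (r j)) z \<in> l2" for j
      unfolding vdiff_def by (rule l2_diff(1)[OF xs(1) z(1)])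
    show "l2norm (vdiff (xs (r j)) z) \<le> K + K" for j
      unfolding vdiff_def using l2_diff(2)[OF xs(1) z(1), of "r j"] xs(2)[of "r j"] z(2) by simp
    show "(\<lambda>j. vdiff (xs (r j)) z i) \<longlonglongrightarrow> 0" for i
      unfolding vdiff_def using lim[of i] by (simp add: LIM_zero)
  qed
  moreover have "A (vdiff (xs (r j)) z) = vdiff (A (xs (r j))) (A z)" for j
    unfolding vdiff_def by (rule bounded_op_diff[OF bA xs(1) z(1)])
  ultimately have "l2_tendsto (\<lambda>j. A (xs (r j))) (A z)"
    unfolding l2_tendsto_def using bounded_op_l2[OF bA] xs(1) z(1) by simp
  then show "\<exists>r y. strict_mono r \<and> l2_tendsto (\<lambda>j. A (xs (r j))) y" using r by blast
qed

theorem theorem3: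
  fixes A :: oper and \<beta> :: "int \<Rightarrow> nat \<Rightarrow> complex"
  assumes "A \<in> toeplitz"
    and "series_coeffs A \<beta>"
  shows "compact_op A \<longleftrightarrow> (\<forall>k. (\<beta> k) sums 0)"
  using compact_imp_diagonals_vanish diagonals_vanish_imp_compact_op assms(1)
    series_coeffs_sums_zero_iff_diagonals_vanish[OF assms(2)] by blast

end
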